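(* Let $p\in\mathbb{C}[X_1,\dots,X_d,T]$. If $N_{\mathcal{L}(\mathcal{D}(\mathbb{R}),\mathcal{S}'(\mathbb{R}^d))}(p)=\{0\}$, then $V(C_{\mathbf{X}}(p))\cap i\mathbb{R}^d=\emptyset$.
   Context: Coordinates on $\mathbb{R}^{d+1}$ are $(\mathbf{x},t)$, $\mathbf{x}\in\mathbb{R}^d$, $t\in\mathbb{R}$, and $\mathbf{X}=(X_1,\dots,X_d)$. $\mathcal{L}(\mathcal{D}(\mathbb{R}),\mathcal{S}'(\mathbb{R}^d))$ is the space of continuous linear maps from $\mathcal{D}(\mathbb{R})$ (inductive limit topology) to $\mathcal{S}'(\mathbb{R}^d)$ (weak-* topology) — the "distributions tempered in the spatial directions"; each such $u$ is identified with the unique $U\in\mathcal{D}'(\mathbb{R}^{d+1})$ with $\langle U,\varphi\otimes\psi\rangle=\langle u(\varphi),\psi\rangle$ for $\varphi\in\mathcal{D}(\mathbb{R})$, $\psi\in\mathcal{D}(\mathbb{R}^d)$, so it is a subspace of $\mathcal{D}'(\mathbb{R}^{d+1})$ (derivatives in $x_k$ and $t$ are the distributional ones). For $p\in\mathbb{C}[\mathbf{X},T]$, $D_p=p\left(\frac{\partial}{\partial x_1},\dots,\frac{\partial}{\partial x_d},\frac{\partial}{\partial t}\right)$, and for a subspace $S\subset\mathcal{D}'(\mathbb{R}^{d+1})$, $N_S(p)=\{u\in S: D_pu=0,\ u|_{t<0}=0\}$, where $u|_{t<0}$ is the restriction to $\{t<0\}$. Writing $p=a_0+a_1T+\dots+a_nT^n$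 with $a_j\in\mathbb{C}[\mathbf{X}]$, the $\mathbf{X}$-content $C_{\mathbf{X}}(p)$ is the ideal of $\mathbb{C}[\mathbf{X}]$ generated by $a_0,\dots,a_n$. For a set $I\subset\mathbb{C}[\mathbf{X}]$, $V(I)=\{\boldsymbol{\xi}\in\mathbb{C}^d: q(\boldsymbol{\xi})=0\ \forall q\in I\}$. *)

theory Defs
  imports "HOL-Analysis.Analysis" "HOL-Library.Poly_Mapping"
          "HOL-Computational_Algebra.Polynomial"
begin

definition dpart :: "'a::euclidean_space \<Rightarrow> ('a \<Rightarrow> complex) \<Rightarrow> 'a \<Rightarrow> complex" where
  "dpart b f x = vector_derivative (\<lambda>s::real. f (x + s *\<^sub>R b)) (at 0)"

primrec diter :: "'a::euclidean_space list \<Rightarrow> ('a \<Rightarrow> complex) \<Rightarrow> 'a \<Rightarrow> complex" where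
  "diter [] f = f"
| "diter (b # bs) f = dpart b (diter bs f)"

definition smooth_fun :: "('a::euclidean_space \<Rightarrow> complex) \<Rightarrow> bool" where
  "smooth_fun f \<longleftrightarrow>
     (\<forall>bs. set bs \<subseteq> Basis \<longrightarrow>
        continuous_on UNIV (diter bs f) \<and>
        (\<forall>b\<in>Basis. \<forall>x. (\<lambda>s::real. diter bs f (x + s *\<^sub>R b)) differentiable (at 0)))"

definition tsupport :: "('a::euclidean_space \<Rightarrow> complex) \<Rightarrow> 'a set" where
  "tsupport f = closure {x. f x \<noteq> 0}"

definition test_fun :: "('a::euclidean_space \<Rightarrow> complex) \<Rightarrow> bool" where
  "test_fun f \<longleftrightarrow> smooth_fun f \<and> compact (tsupport f)"

definition schwartz_fun :: "('a::euclidean_space \<Rightarrow> complex) \<Rightarrow> bool" where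
  "schwartz_fun f \<longleftrightarrow> smooth_fun f \<and>
     (\<forall>k::nat. \<forall>bs. set bs \<subseteq> Basis \<longrightarrow>
        bounded (range (\<lambda>x. norm x ^ k * norm (diter bs f x))))"

text \<open>A (generalised) function is represented by a functional on all functions which is
  canonically 0 outside its domain of test functions.\<close>

definition Cseminorm :: "nat \<Rightarrow> ('a::euclidean_space \<Rightarrow> complex) \<Rightarrow> real" where
  "Cseminorm N f = Sup {norm (diter bs f x) | bs x. set bs \<subseteq> Basis \<and> length bs \<le> N}"

definition Sseminorm :: "nat \<Rightarrow> ('a::euclidean_space \<Rightarrow> complex) \<Rightarrow> real" where
  "Sseminorm N f =
     Sup {(1 + norm x) ^ N * norm (diter bs f x) | bs x. set bs \<subseteq> Basis \<and> length bs \<le> N}"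

text \<open>\<open>\<D>'\<close>: linear functionals on test functions, continuous for the inductive limit
  topology (standard seminorm characterisation).\<close>
definition distribution :: "(('a::euclidean_space \<Rightarrow> complex) \<Rightarrow> complex) \<Rightarrow> bool" where
  "distribution U \<longleftrightarrow>
     (\<forall>\<phi>. \<not> test_fun \<phi> \<longrightarrow> U \<phi> = 0) \<and>
     (\<forall>\<phi> g a b. test_fun \<phi> \<longrightarrow> test_fun g \<longrightarrow>
        U (\<lambda>x. a * \<phi> x + b * g x) = a * U \<phi> + b * U g) \<and>
     (\<forall>K. compact K \<longrightarrow> (\<exists>C N. \<forall>\<phi>. test_fun \<phi> \<and> tsupport \<phi> \<subseteq> K \<longrightarrow>
        norm (U \<phi>) \<le> C * Cseminorm N \<phi>))"

definition tempered :: "(('a::euclidean_space \<Rightarrow> complex) \<Rightarrow> complex) \<Rightarrow> bool" where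
  "tempered T \<longleftrightarrow>
     (\<forall>\<psi>. \<not> schwartz_fun \<psi> \<longrightarrow> T \<psi> = 0) \<and>
     (\<forall>\<psi> g a b. schwartz_fun \<psi> \<longrightarrow> schwartz_fun g \<longrightarrow>
        T (\<lambda>x. a * \<psi> x + b * g x) = a * T \<psi> + b * T g) \<and>
     (\<exists>C N. \<forall>\<psi>. schwartz_fun \<psi> \<longrightarrow> norm (T \<psi>) \<le> C * Sseminorm N \<psi>)"

text \<open>\<open>\<L>(\<D>(\<real>), \<S>'(\<real>^d))\<close>: linear maps from test functions on \<real> to tempered distributions,
  continuous for the inductive limit topology on \<open>\<D>(\<real>)\<close> and the weak-* topology on \<open>\<S>'\<close>
  (i.e. each \<open>\<phi> \<mapsto> \<langle>u \<phi>, \<psi>\<rangle>\<close>, \<psi> Schwartz, is continuous on \<open>\<D>(\<real>)\<close>).\<close>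
definition spat_tempered_map ::
    "((real \<Rightarrow> complex) \<Rightarrow> ((real^'d \<Rightarrow> complex) \<Rightarrow> complex)) \<Rightarrow> bool" where
  "spat_tempered_map u \<longleftrightarrow>
     (\<forall>\<phi>. \<not> test_fun \<phi> \<longrightarrow> u \<phi> = (\<lambda>_. 0)) \<and>
     (\<forall>\<phi>. test_fun \<phi> \<longrightarrow> tempered (u \<phi>)) \<and>
     (\<forall>\<phi> g a b. test_fun \<phi> \<longrightarrow> test_fun g \<longrightarrow>
        u (\<lambda>t. a * \<phi> t + b * g t) = (\<lambda>\<psi>. a * u \<phi> \<psi> + b * u g \<psi>)) \<and>
     (\<forall>\<psi>. schwartz_fun \<psi> \<longrightarrow> distribution (\<lambda>\<phi>. u \<phi> \<psi>))"

text \<open>The subspace of \<open>\<D>'(\<real>^(d+1))\<close> (coordinates (x,t)) identified with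
  \<open>\<L>(\<D>(\<real>), \<S>'(\<real>^d))\<close> via \<open>\<langle>U, \<phi>\<otimes>\<psi>\<rangle> = \<langle>u(\<phi>), \<psi>\<rangle>\<close>.\<close>
definition LDS :: "(((real^('d::finite)) \<times> real \<Rightarrow> complex) \<Rightarrow> complex) set" where
  "LDS = {U. distribution U \<and>
     (\<exists>u::(real \<Rightarrow> complex) \<Rightarrow> ((real^('d::finite) \<Rightarrow> complex) \<Rightarrow> complex). spat_tempered_map u \<and>
        (\<forall>\<phi> \<psi>. test_fun \<phi> \<longrightarrow> test_fun \<psi> \<longrightarrow> U (\<lambda>(x, t). \<phi> t * \<psi> x) = u \<phi> \<psi>))}"

text \<open>\<open>\<complex>[X]\<close> is \<open>('d \<Rightarrow>\<^sub>0 nat) \<Rightarrow>\<^sub>0 complex\<close> (monomial exponents to coefficients);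
  \<open>\<complex>[X,T] = \<complex>[X][T]\<close>, so \<open>p = a_0 + a_1 T + \<dots> + a_n T^n\<close> with \<open>a_j = coeff p j\<close>.\<close>
type_synonym 'd mpoly = "('d \<Rightarrow>\<^sub>0 nat) \<Rightarrow>\<^sub>0 complex"

definition mpeval :: "('d::finite) mpoly \<Rightarrow> complex^'d \<Rightarrow> complex" where
  "mpeval q \<xi> = (\<Sum>\<alpha>\<in>Poly_Mapping.keys q. Poly_Mapping.lookup q \<alpha> * (\<Prod>i\<in>UNIV. (\<xi> $ i) ^ Poly_Mapping.lookup \<alpha> i))"

definition ideal_gen :: "'a::comm_ring_1 set \<Rightarrow> 'a set" where
  "ideal_gen A = {(\<Sum>a\<in>F. r a * a) | F r. finite F \<and> F \<subseteq> A}"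

definition Xcontent :: "'d mpoly poly \<Rightarrow> 'd mpoly set" where
  "Xcontent p = ideal_gen {coeff p j | j. j \<le> degree p}"

definition Vzero :: "('d::finite) mpoly set \<Rightarrow> (complex^'d) set" where
  "Vzero I = {\<xi>. \<forall>q\<in>I. mpeval q \<xi> = 0}"

definition imag_axis_space :: "(complex^'d) set" where
  "imag_axis_space = {\<chi> i. \<i> * complex_of_real (y $ i) | y :: real^'d. True}"

definition ex :: "'d::finite \<Rightarrow> (real^'d) \<times> real" where "ex i = (axis i 1, 0)"
definition et :: "(real^'d) \<times> real" where "et = (0, 1)"

text \<open>A list of directions realising \<open>\<partial>_x^m \<partial>_t^j\<close> (order is immaterial on smooth functions).\<close>
definition dlist :: "('d::finite \<Rightarrow>\<^sub>0 nat) \<Rightarrow> nat \<Rightarrow> ((real^'d) \<times> real) list" where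
  "dlist m j = (SOME bs. set bs \<subseteq> insert et (range ex) \<and>
      (\<forall>i. count_list bs (ex i) = Poly_Mapping.lookup m i) \<and> count_list bs et = j)"

text \<open>\<open>D_p U\<close> in the sense of distributions: \<open>\<langle>\<partial>^\<alpha> U, \<phi>\<rangle> = (-1)^|\<alpha>| \<langle>U, \<partial>^\<alpha> \<phi>\<rangle>\<close>.\<close>
definition Dop :: "('d::finite) mpoly poly \<Rightarrow> (((real^'d) \<times> real \<Rightarrow> complex) \<Rightarrow> complex)
                   \<Rightarrow> (((real^'d) \<times> real \<Rightarrow> complex) \<Rightarrow> complex)" where
  "Dop p U = (\<lambda>\<phi>. if test_fun \<phi> then
      (\<Sum>j\<le>degree p. \<Sum>m\<in>Poly_Mapping.keys (coeff p j).
         Poly_Mapping.lookup (coeff p j) m * (-1) ^ length (dlist m j) * U (diter (dlist m j) \<phi>))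
    else 0)"

definition vanishes_neg_time :: "(((real^'d) \<times> real \<Rightarrow> complex) \<Rightarrow> complex) \<Rightarrow> bool" where
  "vanishes_neg_time U \<longleftrightarrow>
     (\<forall>\<phi>. test_fun \<phi> \<and> tsupport \<phi> \<subseteq> {z. snd z < 0} \<longrightarrow> U \<phi> = 0)"

definition Nsp :: "(((real^'d) \<times> real \<Rightarrow> complex) \<Rightarrow> complex) set \<Rightarrow> ('d::finite) mpoly poly
                   \<Rightarrow> (((real^'d) \<times> real \<Rightarrow> complex) \<Rightarrow> complex) set" where
  "Nsp S p = {U\<in>S. Dop p U = (\<lambda>_. 0) \<and> vanishes_neg_time U}"

end

(*
  If i y, with y real, is a common zero of the coefficients a_j of p = sum_j a_j T^j, let
  W(t) = exp (-1/t) for t > 0 and W(t) = 0 for t <= 0, a smooth function. Then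
  u(x, t) = exp (i y.x) W(t) satisfies d/dx_k u = i y_k u, so
  D_p u = sum_j a_j(i y) exp (i y.x) W^(j)(t) = 0, and integration against u is a nonzero element
  of N(p): it vanishes for t < 0, and on tensor products it is the product of integration against
  W and the tempered distribution psi |-> integral of exp (i y.x) psi(x).
*)

theory Submission
  imports Defs "HOL-Probability.Sinc_Integral" "HOL-Library.Multiset"
begin

section \<open>Smooth functions\<close>

abbreviation has_dpart :: "'a::real_normed_vector \<Rightarrow> ('a \<Rightarrow> complex) \<Rightarrow> complex \<Rightarrow> 'a \<Rightarrow> bool" where
  "has_dpart b f D x \<equiv> ((\<lambda>s::real. f (x + s *\<^sub>R b)) has_vector_derivative D) (at 0)"

lemma dpart_eqI: "has_dpart b f D x \<Longrightarrow> dpart b f x = D"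
  unfolding dpart_def by (rule vector_derivative_at)

lemma diter_append: "diter (xs @ ys) f = diter xs (diter ys f)"
  by (induction xs) auto

lemma has_vector_derivative_affine_comp:
  fixes g :: "real \<Rightarrow> 'v::real_normed_vector"
  assumes "(g has_vector_derivative D) (at (a + c * t))"
  shows "((\<lambda>s. g (a + c * s)) has_vector_derivative c *\<^sub>R D) (at t)"
proof -
  have "((\<lambda>s. a + c * s) has_vector_derivative c) (at t)"
    by (auto intro!: derivative_eq_intros simp: has_real_derivative_iff_has_vector_derivative[symmetric])
  from vector_diff_chain_at[OF this, of g] assms show ?thesis by (simp add: o_def)
qed

lemma smooth_fun_continuous_on: "smooth_fun f \<Longrightarrow> continuous_on UNIV f"
  unfolding smooth_fun_def by (drule spec[of _ "[]"]) simp

lemma smooth_fun_has_dpart: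
  assumes "smooth_fun f" "b \<in> Basis" shows "has_dpart b f (dpart b f x) x"
  using assms unfolding smooth_fun_def dpart_def
  by (auto dest!: spec[of _ "[]"] intro: vector_derivative_works[THEN iffD1])

lemma smooth_fun_dpart:
  assumes "smooth_fun f" "b \<in> Basis" shows "smooth_fun (dpart b f)"
  unfolding smooth_fun_def
proof (intro allI impI)
  fix bs :: "'a list" assume "set bs \<subseteq> Basis"
  with assms have "set (bs @ [b]) \<subseteq> Basis" by auto
  with assms(1) show "continuous_on UNIV (diter bs (dpart b f)) \<and>
      (\<forall>c\<in>Basis. \<forall>x. (\<lambda>s. diter bs (dpart b f) (x + s *\<^sub>R c)) differentiable at 0)"
    unfolding smooth_fun_def by (auto simp: diter_append dest!: spec[of _ "bs @ [b]"])
qed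

lemma smooth_fun_diter: "smooth_fun f \<Longrightarrow> set bs \<subseteq> Basis \<Longrightarrow> smooth_fun (diter bs f)"
  by (induction bs) (auto intro: smooth_fun_dpart)

lemma smooth_fun_coinduct:
  assumes "f \<in> S"
    and cont: "\<And>g. g \<in> S \<Longrightarrow> continuous_on UNIV g"
    and deriv: "\<And>g b. g \<in> S \<Longrightarrow> b \<in> Basis \<Longrightarrow> \<exists>g'\<in>S. \<forall>x. has_dpart b g (g' x) x"
  shows "smooth_fun f"
proof -
  have closed: "dpart b g \<in> S" if g: "g \<in> S" and b: "b \<in> Basis" for g b
  proof -
    obtain g' where "g' \<in> S" "\<And>x. has_dpart b g (g' x) x" using deriv[OF g b] by blast
    moreover from this have "dpart b g = g'" by (intro ext dpart_eqI)
    ultimately show ?thesis by simp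
  qed
  have "diter bs f \<in> S" if "set bs \<subseteq> Basis" for bs
    using that by (induction bs) (auto simp: \<open>f \<in> S\<close> closed)
  moreover have "(\<lambda>s::real. g (x + s *\<^sub>R b)) differentiable (at 0)" if "g \<in> S" "b \<in> Basis" for g b x
    using deriv[OF that] by (auto intro: differentiableI_vector)
  ultimately show ?thesis unfolding smooth_fun_def using cont by blast
qed

lemma smooth_fun_const: "smooth_fun (\<lambda>_::'a::euclidean_space. c)"
proof (rule smooth_fun_coinduct[where S = "range (\<lambda>c. \<lambda>_. c)"])
  fix g :: "'a \<Rightarrow> complex" and b :: 'a assume "g \<in> range (\<lambda>c. \<lambda>_. c)"
  then show "\<exists>g'\<in>range (\<lambda>c. \<lambda>_. c). \<forall>x. has_dpart b g (g' x) x"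
    by (intro bexI[of _ "\<lambda>_. 0"]) auto
qed auto

text \<open>Products of smooth functions are not closed under partial derivatives, but by the Leibniz
  rule their finite sums are.\<close>
inductive_set sums_of_products :: "('a::euclidean_space \<Rightarrow> complex) set" where
  product: "smooth_fun f \<Longrightarrow> smooth_fun g \<Longrightarrow> (\<lambda>x. f x * g x) \<in> sums_of_products"
| sum: "h \<in> sums_of_products \<Longrightarrow> k \<in> sums_of_products \<Longrightarrow> (\<lambda>x. h x + k x) \<in> sums_of_products"

lemma sums_of_products_continuous_on: "h \<in> sums_of_products \<Longrightarrow> continuous_on UNIV h"
  by (induction rule: sums_of_products.induct) (auto intro!: continuous_intros dest: smooth_fun_continuous_on)

lemma sums_of_products_has_dpart:
  assumes "h \<in> sums_of_products" "b \<in> Basis"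
  shows "\<exists>h'\<in>sums_of_products. \<forall>x. has_dpart b h (h' x) x"
  using assms(1)
proof (induction rule: sums_of_products.induct)
  case (product f g)
  have "(\<lambda>x. dpart b f x * g x + f x * dpart b g x) \<in> sums_of_products"
    using product assms(2) by (intro sums_of_products.intros smooth_fun_dpart)
  moreover have "has_dpart b (\<lambda>x. f x * g x) (dpart b f x * g x + f x * dpart b g x) x" for x
    using has_vector_derivative_mult[OF smooth_fun_has_dpart[OF product(1) assms(2)]
        smooth_fun_has_dpart[OF product(2) assms(2)]]
    by (simp add: algebra_simps)
  ultimately show ?case by (intro bexI[of _ "\<lambda>x. dpart b f x * g x + f x * dpart b g x"]) auto
next
  case (sum h k)
  then obtain h' k' where "h' \<in> sums_of_products" "\<And>x. has_dpart b h (h' x) x"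
    and "k' \<in> sums_of_products" "\<And>x. has_dpart b k (k' x) x" by blast
  then show ?case by (intro bexI[of _ "\<lambda>x. h' x + k' x"] allI has_vector_derivative_add sums_of_products.sum)
qed

lemma smooth_fun_sums_of_products: "h \<in> sums_of_products \<Longrightarrow> smooth_fun h"
  by (rule smooth_fun_coinduct[where S = sums_of_products])
    (auto intro: sums_of_products_continuous_on sums_of_products_has_dpart)

lemma smooth_fun_mult: "smooth_fun f \<Longrightarrow> smooth_fun g \<Longrightarrow> smooth_fun (\<lambda>x. f x * g x)"
  by (rule smooth_fun_sums_of_products[OF sums_of_products.product])

lemma smooth_fun_cmult: "smooth_fun f \<Longrightarrow> smooth_fun (\<lambda>x. c * f x)"
  by (intro smooth_fun_mult smooth_fun_const)

lemma smooth_fun_lincomb: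
  assumes "smooth_fun f" "smooth_fun g" shows "smooth_fun (\<lambda>x. a * f x + b * g x)"
  by (rule smooth_fun_sums_of_products[OF sums_of_products.sum[OF
        sums_of_products.product[OF smooth_fun_const assms(1)]
        sums_of_products.product[OF smooth_fun_const assms(2)]]])

lemma smooth_fun_prod:
  "finite S \<Longrightarrow> (\<And>i. i \<in> S \<Longrightarrow> smooth_fun (f i)) \<Longrightarrow> smooth_fun (\<lambda>x. \<Prod>i\<in>S. f i x)"
  by (induction S rule: finite_induct) (auto intro: smooth_fun_const smooth_fun_mult)

lemma smooth_fun_compose_affine:
  fixes L :: "'a::euclidean_space \<Rightarrow> 'b::euclidean_space"
  assumes "smooth_fun h" "linear L"
    and L_Basis: "\<And>b. b \<in> Basis \<Longrightarrow> \<exists>c b'. b' \<in> Basis \<and> L b = c *\<^sub>R b'"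
  shows "smooth_fun (\<lambda>x. h (L x + a))"
proof (rule smooth_fun_coinduct[where S = "{\<lambda>x. h (L x + a) | h. smooth_fun h}"])
  fix g assume "g \<in> {\<lambda>x. h (L x + a) | h. smooth_fun h}"
  then obtain h where g: "g = (\<lambda>x. h (L x + a))" and h: "smooth_fun h" by blast
  have "continuous_on UNIV L"
    using \<open>linear L\<close> by (simp add: linear_continuous_on linear_conv_bounded_linear)
  then show "continuous_on UNIV g"
    unfolding g by (intro continuous_on_compose2[OF smooth_fun_continuous_on[OF h]] continuous_intros) auto
  fix b :: 'a assume "b \<in> Basis"
  then obtain c b' where b': "b' \<in> Basis" "L b = c *\<^sub>R b'" using L_Basis by blast
  have "has_dpart b g (of_real c * dpart b' h (L x + a)) x" for x
  proof -
    have "g (x + s *\<^sub>R b) = h ((L x + a) + (c * s) *\<^sub>R b')" for s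
      using b' \<open>linear L\<close> by (simp add: g linear_add linear_scale algebra_simps)
    moreover have "((\<lambda>s. h ((L x + a) + (0 + c * s) *\<^sub>R b')) has_vector_derivative
        c *\<^sub>R dpart b' h (L x + a)) (at 0)"
      using smooth_fun_has_dpart[OF h b'(1)] by (intro has_vector_derivative_affine_comp) simp
    ultimately show ?thesis by (simp add: scaleR_conv_of_real)
  qed
  moreover have "smooth_fun (\<lambda>y. of_real c * dpart b' h y)"
    by (intro smooth_fun_cmult smooth_fun_dpart h b')
  ultimately show "\<exists>g'\<in>{\<lambda>x. h (L x + a) | h. smooth_fun h}. \<forall>x. has_dpart b g (g' x) x"
    by (intro bexI[of _ "\<lambda>x. of_real c * dpart b' h (L x + a)"] CollectI
        exI[of _ "\<lambda>y. of_real c * dpart b' h y"]) auto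
qed (use assms(1) in blast)

lemma smooth_fun_compose_inner:
  fixes h :: "real \<Rightarrow> complex" and v :: "'a::euclidean_space"
  assumes "smooth_fun h" shows "smooth_fun (\<lambda>x. h (c * (x \<bullet> v) + a))"
proof (rule smooth_fun_compose_affine[OF assms, of "\<lambda>x. c * (x \<bullet> v)"])
  show "linear (\<lambda>x. c * (x \<bullet> v))" by (rule linearI) (simp_all add: algebra_simps)
  show "\<exists>c' b'. b' \<in> Basis \<and> c * (b \<bullet> v) = c' *\<^sub>R b'" for b
    by (intro exI[of _ "c * (b \<bullet> v)"] exI[of _ 1]) simp
qed

lemma smooth_fun_compose_coordinate_map:
  fixes L :: "'a::euclidean_space \<Rightarrow> 'b::euclidean_space"
  assumes "smooth_fun h" "linear L" "\<And>b. b \<in> Basis \<Longrightarrow> L b \<in> insert 0 Basis"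
  shows "smooth_fun (\<lambda>x. h (L x))"
proof -
  obtain u :: 'b where "u \<in> Basis" using nonempty_Basis by blast
  then have "\<exists>c b'. b' \<in> Basis \<and> L b = c *\<^sub>R b'" if "b \<in> Basis" for b
    using assms(3)[OF that] by (metis insertE scaleR_one scaleR_zero_left)
  from smooth_fun_compose_affine[OF assms(1,2) this, of 0] show ?thesis by simp
qed

lemma smooth_fun_fst:
  "smooth_fun h \<Longrightarrow> smooth_fun (\<lambda>z::'a::euclidean_space \<times> 'b::euclidean_space. h (fst z))"
  by (rule smooth_fun_compose_coordinate_map[OF _ linear_fst]) (auto simp: Basis_prod_def)

lemma smooth_fun_snd:
  "smooth_fun h \<Longrightarrow> smooth_fun (\<lambda>z::'a::euclidean_space \<times> 'b::euclidean_space. h (snd z))"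
  by (rule smooth_fun_compose_coordinate_map[OF _ linear_snd]) (auto simp: Basis_prod_def)

lemma smooth_fun_derivative_sequence:
  fixes F :: "nat \<Rightarrow> real \<Rightarrow> complex"
  assumes "\<And>n t. (F n has_vector_derivative F (Suc n) t) (at t)"
  shows "smooth_fun (F n)"
proof (rule smooth_fun_coinduct[where S = "range F"])
  fix g assume "g \<in> range F"
  then obtain n where g: "g = F n" by blast
  show "continuous_on UNIV g" unfolding g
    using assms by (intro differentiable_imp_continuous_on differentiable_at_imp_differentiable_on)
      (blast intro: differentiableI_vector)
  fix b :: real assume "b \<in> Basis"
  then have "b = 1" by simp
  have "has_dpart b g (F (Suc n) t) t" for t
    using has_vector_derivative_affine_comp[of "F n" "F (Suc n) t" t 1 0] assms
    by (simp add: g \<open>b = 1\<close> add.commute)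
  then show "\<exists>g'\<in>range F. \<forall>t. has_dpart b g (g' t) t" by blast
qed blast

lemma dpart_lincomb:
  assumes "smooth_fun f" "smooth_fun g" "c \<in> Basis"
  shows "dpart c (\<lambda>x. a * f x + b * g x) = (\<lambda>x. a * dpart c f x + b * dpart c g x)"
  by (intro ext dpart_eqI has_vector_derivative_add has_vector_derivative_mult_right
      smooth_fun_has_dpart assms)

lemma diter_lincomb:
  assumes "smooth_fun f" "smooth_fun g" "set bs \<subseteq> Basis"
  shows "diter bs (\<lambda>x. a * f x + b * g x) = (\<lambda>x. a * diter bs f x + b * diter bs g x)"
  using assms(3)
proof (induction bs)
  case (Cons c bs)
  then have "set bs \<subseteq> Basis" "c \<in> Basis" by auto
  with Cons.IH show ?case
    using dpart_lincomb[OF smooth_fun_diter[OF assms(1)] smooth_fun_diter[OF assms(2)]] by simp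
qed simp

section \<open>Supports, test functions and Schwartz functions\<close>

lemma not_in_tsupport: "x \<notin> tsupport f \<Longrightarrow> f x = 0"
  using closure_subset[of "{x. f x \<noteq> 0}"] unfolding tsupport_def by blast

lemma closed_tsupport: "closed (tsupport f)"
  unfolding tsupport_def by simp

lemma tsupport_subset: "{x. f x \<noteq> 0} \<subseteq> S \<Longrightarrow> closed S \<Longrightarrow> tsupport f \<subseteq> S"
  unfolding tsupport_def by (rule closure_minimal)

lemma compact_tsupport_subset: "compact K \<Longrightarrow> tsupport f \<subseteq> K \<Longrightarrow> compact (tsupport f)"
  using compact_Int_closed[OF _ closed_tsupport, of K f] by (simp add: Int_absorb1)

lemma dpart_eq_0_outside_tsupport:
  assumes "x \<notin> tsupport f" shows "dpart b f x = 0"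
proof (rule dpart_eqI)
  let ?S = "{s::real. x + s *\<^sub>R b \<in> - tsupport f}"
  have "open ?S"
    by (intro open_vimage[of "- tsupport f" "\<lambda>s. x + s *\<^sub>R b", unfolded vimage_def]
        continuous_intros) (auto simp: closed_tsupport)
  moreover have "0 \<in> ?S" using assms by simp
  moreover have "((\<lambda>_. 0) has_derivative (\<lambda>h. h *\<^sub>R 0)) (at (0::real))" by simp
  ultimately have "((\<lambda>s. f (x + s *\<^sub>R b)) has_derivative (\<lambda>h. h *\<^sub>R 0)) (at 0)"
    using has_derivative_transform_within_open[of "\<lambda>_. 0" _ 0 UNIV ?S "\<lambda>s. f (x + s *\<^sub>R b)"]
    by (simp add: not_in_tsupport)
  then show "has_dpart b f 0 x" by (simp add: has_vector_derivative_def)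
qed

lemma tsupport_dpart: "tsupport (dpart b f) \<subseteq> tsupport f"
  using dpart_eq_0_outside_tsupport by (intro tsupport_subset closed_tsupport) blast

lemma tsupport_diter: "tsupport (diter bs f) \<subseteq> tsupport f"
  by (induction bs) (auto dest: subsetD[OF tsupport_dpart])

lemma tsupport_lincomb: "tsupport (\<lambda>x. a * f x + b * g x) \<subseteq> tsupport f \<union> tsupport g"
  unfolding tsupport_def closure_Un[symmetric] by (rule closure_mono) auto

lemma test_fun_diter: "test_fun f \<Longrightarrow> set bs \<subseteq> Basis \<Longrightarrow> test_fun (diter bs f)"
  unfolding test_fun_def by (auto intro: smooth_fun_diter compact_tsupport_subset[OF _ tsupport_diter])

lemma test_fun_dpart: "test_fun f \<Longrightarrow> b \<in> Basis \<Longrightarrow> test_fun (dpart b f)"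
  using test_fun_diter[of f "[b]"] by simp

lemma test_fun_lincomb: "test_fun f \<Longrightarrow> test_fun g \<Longrightarrow> test_fun (\<lambda>x. a * f x + b * g x)"
  unfolding test_fun_def
  by (auto intro: smooth_fun_lincomb compact_tsupport_subset[OF compact_Un tsupport_lincomb])

lemma test_fun_continuous_on: "test_fun f \<Longrightarrow> continuous_on UNIV f"
  unfolding test_fun_def by (auto intro: smooth_fun_continuous_on)

lemma test_fun_tensor:
  fixes \<phi> :: "'b::euclidean_space \<Rightarrow> complex" and \<psi> :: "'a::euclidean_space \<Rightarrow> complex"
  assumes "test_fun \<phi>" "test_fun \<psi>"
  shows "test_fun (\<lambda>(x, t). \<phi> t * \<psi> x)"
proof -
  have "tsupport (\<lambda>(x, t). \<phi> t * \<psi> x) \<subseteq> tsupport \<psi> \<times> tsupport \<phi>"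
    by (intro tsupport_subset closed_Times closed_tsupport)
      (auto simp: tsupport_def intro: closure_subset[THEN subsetD])
  moreover have "smooth_fun (\<lambda>z::'a \<times> 'b. \<phi> (snd z) * \<psi> (fst z))"
    using assms unfolding test_fun_def by (intro smooth_fun_mult smooth_fun_fst smooth_fun_snd) auto
  ultimately show ?thesis
    using assms unfolding test_fun_def
    by (auto simp: case_prod_beta' intro: compact_tsupport_subset[OF compact_Times])
qed

lemma bounded_range_compact_support:
  fixes h :: "'a::topological_space \<Rightarrow> 'b::real_normed_vector"
  assumes "continuous_on UNIV h" "compact K" "\<And>x. x \<notin> K \<Longrightarrow> h x = 0"
  shows "bounded (range h)"
proof -
  have "bounded (h ` K)"
    using assms(1,2) by (intro compact_imp_bounded compact_continuous_image) (auto intro: continuous_on_subset)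
  moreover have "range h \<subseteq> insert 0 (h ` K)" using assms(3) by auto
  ultimately show ?thesis using bounded_insert bounded_subset by blast
qed

lemma test_fun_imp_schwartz_fun: "test_fun f \<Longrightarrow> schwartz_fun f"
  unfolding schwartz_fun_def
proof (intro conjI allI impI)
  assume f: "test_fun f"
  then show "smooth_fun f" by (simp add: test_fun_def)
  fix k :: nat and bs :: "'a list" assume "set bs \<subseteq> Basis"
  with f have "test_fun (diter bs f)" by (rule test_fun_diter)
  then show "bounded (range (\<lambda>x. norm x ^ k * norm (diter bs f x)))"
    unfolding test_fun_def
    by (intro bounded_range_compact_support[where K = "tsupport (diter bs f)"])
      (auto intro!: continuous_intros smooth_fun_continuous_on simp: not_in_tsupport)
qed

lemma schwartz_fun_decay:
  assumes "schwartz_fun f" "set bs \<subseteq> Basis"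
  obtains B where "\<And>x. norm x ^ k * norm (diter bs f x) \<le> B"
  using assms unfolding schwartz_fun_def bounded_iff by fastforce

lemma schwartz_fun_lincomb:
  assumes f: "schwartz_fun f" and g: "schwartz_fun g"
  shows "schwartz_fun (\<lambda>x. a * f x + b * g x)"
  unfolding schwartz_fun_def
proof (intro conjI allI impI)
  have sf: "smooth_fun f" "smooth_fun g" using f g unfolding schwartz_fun_def by auto
  then show "smooth_fun (\<lambda>x. a * f x + b * g x)" by (rule smooth_fun_lincomb)
  fix k :: nat and bs :: "'a list" assume bs: "set bs \<subseteq> Basis"
  obtain B1 B2 where B1: "\<And>x. norm x ^ k * norm (diter bs f x) \<le> B1"
    and B2: "\<And>x. norm x ^ k * norm (diter bs g x) \<le> B2"
    using schwartz_fun_decay[OF f bs] schwartz_fun_decay[OF g bs] by metis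
  have "norm x ^ k * norm (a * diter bs f x + b * diter bs g x) \<le> norm a * B1 + norm b * B2" for x
  proof -
    have "norm x ^ k * norm (a * diter bs f x + b * diter bs g x)
        \<le> norm x ^ k * (norm a * norm (diter bs f x) + norm b * norm (diter bs g x))"
      by (intro mult_left_mono) (auto simp: norm_mult intro: norm_triangle_le)
    also have "\<dots> = norm a * (norm x ^ k * norm (diter bs f x)) + norm b * (norm x ^ k * norm (diter bs g x))"
      by (simp add: algebra_simps)
    also have "\<dots> \<le> norm a * B1 + norm b * B2"
      by (intro add_mono mult_left_mono B1 B2) auto
    finally show ?thesis .
  qed
  then show "bounded (range (\<lambda>x. norm x ^ k * norm (diter bs (\<lambda>x. a * f x + b * g x) x)))"
    unfolding diter_lincomb[OF sf bs] bounded_iff by force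
qed

lemma norm_le_Cseminorm_0:
  assumes "test_fun f" shows "norm (f x) \<le> Cseminorm 0 f"
proof -
  have "bounded (range f)"
    using assms unfolding test_fun_def
    by (intro bounded_range_compact_support[of f "tsupport f"])
      (auto intro: smooth_fun_continuous_on not_in_tsupport)
  then have "bdd_above (range (\<lambda>x. norm (f x)))"
    by (auto simp: bounded_iff intro: bdd_aboveI2)
  moreover have "{norm (diter bs f x) | bs x. set bs \<subseteq> Basis \<and> length bs \<le> 0} = range (\<lambda>x. norm (f x))"
    by force
  ultimately show ?thesis unfolding Cseminorm_def by (auto intro: cSup_upper)
qed

lemma one_plus_power_le: "(r::real) \<ge> 0 \<Longrightarrow> (1 + r) ^ N \<le> 2 ^ N * (1 + r ^ N)"
proof (cases "r \<le> 1")
  case True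
  moreover assume "r \<ge> 0"
  ultimately have "(1 + r) ^ N \<le> 2 ^ N" by (intro power_mono) auto
  then show ?thesis using \<open>r \<ge> 0\<close> by (simp add: add_increasing2 order_trans)
next
  case False
  then have "(1 + r) ^ N \<le> (2 * r) ^ N" by (intro power_mono) auto
  then show ?thesis using False by (simp add: algebra_simps order_trans)
qed

lemma weighted_le_Sseminorm:
  fixes f :: "'a::euclidean_space \<Rightarrow> complex"
  assumes "schwartz_fun f" shows "(1 + norm x) ^ N * norm (f x) \<le> Sseminorm N f"
proof -
  let ?A = "{bs. set bs \<subseteq> (Basis::'a set) \<and> length bs \<le> N}"
  let ?g = "\<lambda>bs x. (1 + norm x) ^ N * norm (diter bs f x)"
  have "bdd_above (range (?g bs))" if bs: "set bs \<subseteq> Basis" for bs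
  proof -
    obtain B0 BN where B0: "\<And>x. norm x ^ 0 * norm (diter bs f x) \<le> B0"
      and BN: "\<And>x. norm x ^ N * norm (diter bs f x) \<le> BN"
      using schwartz_fun_decay[OF assms bs] by metis
    have "?g bs x \<le> 2 ^ N * (B0 + BN)" for x
    proof -
      have "?g bs x \<le> 2 ^ N * (1 + norm x ^ N) * norm (diter bs f x)"
        by (intro mult_right_mono one_plus_power_le) auto
      also have "\<dots> = 2 ^ N * (norm x ^ 0 * norm (diter bs f x) + norm x ^ N * norm (diter bs f x))"
        by (simp add: algebra_simps)
      also have "\<dots> \<le> 2 ^ N * (B0 + BN)"
        by (intro mult_left_mono add_mono B0 BN) auto
      finally show ?thesis .
    qed
    then show ?thesis by (rule bdd_aboveI2)
  qed
  then have "bdd_above (\<Union>bs\<in>?A. range (?g bs))"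
    by (subst bdd_above_UN) (auto intro: finite_lists_length_le)
  moreover have "?g [] x \<in> (\<Union>bs\<in>?A. range (?g bs))" by (intro UN_I[of "[]"] rangeI) simp
  moreover have "{?g bs x | bs x. set bs \<subseteq> Basis \<and> length bs \<le> N} = (\<Union>bs\<in>?A. range (?g bs))"
    by blast
  ultimately show ?thesis unfolding Sseminorm_def by (simp add: cSup_upper)
qed

section \<open>The flat function\<close>

text \<open>On \<open>t > 0\<close> the \<open>n\<close>-th derivative of \<open>exp (-1/t)\<close> is \<open>P\<^sub>n (1/t) exp (-1/t)\<close>, where
  differentiating gives \<open>P\<^sub>n\<^sub>+\<^sub>1 (s) = s\<^sup>2 (P\<^sub>n (s) - P\<^sub>n' (s))\<close>.\<close>
fun flat_poly :: "nat \<Rightarrow> real poly" where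
  "flat_poly 0 = 1"
| "flat_poly (Suc n) = [:0, 0, 1:] * (flat_poly n - pderiv (flat_poly n))"

definition flat_fun :: "nat \<Rightarrow> real \<Rightarrow> real" where
  "flat_fun n t = (if t > 0 then poly (flat_poly n) (1 / t) * exp (- 1 / t) else 0)"

lemma poly_times_exp_tendsto_0: "((\<lambda>h. poly Q (1 / h) * exp (- 1 / h)) \<longlongrightarrow> (0::real)) (at_right 0)"
proof -
  have "((\<lambda>s. \<Sum>i\<le>degree Q. coeff Q i * (s ^ i / exp s)) \<longlongrightarrow> 0) at_top"
    by (intro tendsto_null_sum tendsto_mult_right_zero tendsto_power_div_exp_0)
  moreover have "poly Q s * exp (- s) = (\<Sum>i\<le>degree Q. coeff Q i * (s ^ i / exp s))" for s
    by (simp add: poly_altdef exp_minus divide_inverse sum_distrib_right mult.assoc)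
  ultimately have "((\<lambda>s. poly Q s * exp (- s)) \<longlongrightarrow> 0) at_top" by simp
  from filterlim_compose[OF this filterlim_inverse_at_top_right] show ?thesis
    by (simp add: o_def divide_inverse)
qed

lemma flat_fun_has_derivative_0: "(flat_fun n has_real_derivative 0) (at 0)"
proof -
  have "\<forall>\<^sub>F h in at_left 0. 0 = (flat_fun n h - flat_fun n 0) / (h - 0)"
    by (auto simp: eventually_at_left_field flat_fun_def intro!: exI[of _ "-1"])
  then have left: "((\<lambda>h. (flat_fun n h - flat_fun n 0) / (h - 0)) \<longlongrightarrow> 0) (at_left 0)"
    by (rule Lim_transform_eventually[OF tendsto_const])
  have "\<forall>\<^sub>F h in at_right 0. poly ([:0, 1:] * flat_poly n) (1 / h) * exp (- 1 / h)
      = (flat_fun n h - flat_fun n 0) / (h - 0)"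
    by (auto simp: eventually_at_right_field flat_fun_def intro!: exI[of _ 1])
  then have right: "((\<lambda>h. (flat_fun n h - flat_fun n 0) / (h - 0)) \<longlongrightarrow> 0) (at_right 0)"
    by (rule Lim_transform_eventually[OF poly_times_exp_tendsto_0])
  have "((\<lambda>h. (flat_fun n h - flat_fun n 0) / (h - 0)) \<longlongrightarrow> 0) (at 0)"
    unfolding at_eq_sup_left_right by (rule filterlim_sup[OF left right])
  then show ?thesis by (simp add: has_field_derivative_iff)
qed

lemma flat_fun_has_derivative: "(flat_fun n has_real_derivative flat_fun (Suc n) t) (at t)"
proof -
  consider "t > 0" | "t < 0" | "t = 0" by linarith
  then show ?thesis
  proof cases
    case 1
    let ?P = "flat_poly n"
    have "((\<lambda>t. poly ?P (1 / t) * exp (- 1 / t)) has_real_derivative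
       poly (pderiv ?P) (1 / t) * (- 1 / t\<^sup>2) * exp (- 1 / t) + poly ?P (1 / t) * (exp (- 1 / t) * (1 / t\<^sup>2))) (at t)"
      using 1 by (auto intro!: derivative_eq_intros DERIV_chain2[OF poly_DERIV]
          simp: power2_eq_square field_simps)
    moreover have "poly (pderiv ?P) (1 / t) * (- 1 / t\<^sup>2) * exp (- 1 / t) +
        poly ?P (1 / t) * (exp (- 1 / t) * (1 / t\<^sup>2)) = flat_fun (Suc n) t"
      using 1 by (simp add: flat_fun_def field_simps power2_eq_square)
    ultimately have "((\<lambda>t. poly ?P (1 / t) * exp (- 1 / t)) has_real_derivative flat_fun (Suc n) t) (at t)"
      by simp
    then show ?thesis
      by (rule has_field_derivative_transform_within_open[where S = "{0<..}"])
        (use 1 in \<open>auto simp: flat_fun_def\<close>)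
  next
    case 2
    have "((\<lambda>_. 0) has_real_derivative flat_fun (Suc n) t) (at t)"
      using 2 by (simp add: flat_fun_def)
    then show ?thesis
      by (rule has_field_derivative_transform_within_open[where S = "{..<0}"])
        (use 2 in \<open>auto simp: flat_fun_def\<close>)
  next
    case 3
    then show ?thesis using flat_fun_has_derivative_0 by (simp add: flat_fun_def)
  qed
qed

lemma continuous_on_flat_fun: "continuous_on UNIV (flat_fun n)"
  by (intro continuous_at_imp_continuous_on ballI DERIV_isCont[OF flat_fun_has_derivative])

lemma smooth_fun_flat_fun: "smooth_fun (\<lambda>t. complex_of_real (flat_fun n t))"
  by (rule smooth_fun_derivative_sequence[of "\<lambda>n t. complex_of_real (flat_fun n t)"])
    (intro has_vector_derivative_of_real flat_fun_has_derivative)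

lemma flat_fun_eq_0: "t \<le> 0 \<Longrightarrow> flat_fun n t = 0"
  by (simp add: flat_fun_def)

lemma flat_fun_0_pos: "t > 0 \<Longrightarrow> flat_fun 0 t > 0"
  by (simp add: flat_fun_def)

lemma flat_fun_0_nonneg: "flat_fun 0 t \<ge> 0"
  by (simp add: flat_fun_def)

section \<open>Integrals of continuous functions\<close>

lemma integrable_compact_support:
  fixes F :: "'a::euclidean_space \<Rightarrow> 'b::{banach, second_countable_topology}"
  assumes "continuous_on UNIV F" "compact K" "\<And>x. x \<notin> K \<Longrightarrow> F x = 0"
  shows "integrable lborel F"
proof -
  have "integrable lborel (\<lambda>x. indicator K x *\<^sub>R F x)"
    by (rule borel_integrable_compact[OF assms(2) continuous_on_subset[OF assms(1)]]) auto
  moreover have "(\<lambda>x. indicator K x *\<^sub>R F x) = F"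
    using assms(3) by (auto simp: indicator_def)
  ultimately show ?thesis by simp
qed

lemma integrable_mult_test_fun:
  assumes "continuous_on UNIV P" "test_fun \<phi>"
  shows "integrable lborel (\<lambda>z. P z * \<phi> z)"
  using assms
  by (intro integrable_compact_support[where K = "tsupport \<phi>"])
    (auto intro!: continuous_intros simp: test_fun_continuous_on not_in_tsupport test_fun_def)

lemma lborel_integral_translate:
  fixes F :: "'a::euclidean_space \<Rightarrow> 'b::{banach, second_countable_topology}"
  assumes "F \<in> borel_measurable borel"
  shows "(\<integral>x. F (x + c) \<partial>lborel) = (\<integral>x. F x \<partial>lborel)"
proof -
  have "(\<integral>x. F x \<partial>lborel) = (\<integral>x. F x \<partial>(distr lborel borel ((+) c)))"
    by (simp add: lborel_distr_plus)
  also have "\<dots> = (\<integral>x. F (x + c) \<partial>lborel)"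
    by (subst integral_distr) (auto simp: assms add.commute)
  finally show ?thesis by simp
qed

lemma has_vector_derivative_along_line:
  assumes "\<And>z. has_dpart b F (F' z) z"
  shows "((\<lambda>s. F (z + s *\<^sub>R b)) has_vector_derivative F' (z + r *\<^sub>R b)) (at r)"
proof -
  have "((\<lambda>s. F ((z + r *\<^sub>R b) + s *\<^sub>R b)) has_vector_derivative F' (z + r *\<^sub>R b)) (at (- r + 1 * r))"
    using assms[of "z + r *\<^sub>R b"] by simp
  from has_vector_derivative_affine_comp[OF this] show ?thesis
    by (simp add: algebra_simps)
qed

lemma norm_diff_le_along_line:
  assumes "\<And>z. has_dpart b F (F' z) z" "\<And>z. norm (F' z) \<le> M"
  shows "norm (F (z + s *\<^sub>R b) - F z) \<le> M * \<bar>s\<bar>"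
proof -
  have "norm ((\<lambda>r. F (z + r *\<^sub>R b)) s - (\<lambda>r. F (z + r *\<^sub>R b)) 0) \<le> M * norm (s - 0)"
  proof (rule differentiable_bound[where S = UNIV and f' = "\<lambda>r h. h *\<^sub>R F' (z + r *\<^sub>R b)"])
    show "((\<lambda>r. F (z + r *\<^sub>R b)) has_derivative (\<lambda>h. h *\<^sub>R F' (z + r *\<^sub>R b))) (at r within UNIV)" for r
      using has_vector_derivative_along_line[OF assms(1)] by (simp add: has_vector_derivative_def)
    show "onorm (\<lambda>h. h *\<^sub>R F' (z + r *\<^sub>R b)) \<le> M" for r
      using assms(2) by (simp add: onorm_scaleR_left[OF bounded_linear_ident] onorm_id)
  qed auto
  then show ?thesis by simp
qed

lemma difference_quotient_tendsto:
  assumes "has_dpart b F D z" and s: "filterlim s (at 0) sequentially"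
  shows "(\<lambda>n. (1 / s n) *\<^sub>R (F (z + s n *\<^sub>R b) - F z)) \<longlonglongrightarrow> D"
proof -
  have "((\<lambda>h. norm (F (z + h *\<^sub>R b) - F z - h *\<^sub>R D) / norm h) \<longlongrightarrow> 0) (at 0)"
    using assms(1) unfolding has_vector_derivative_def has_derivative_at by simp
  from filterlim_compose[OF this s]
  have "(\<lambda>n. norm (F (z + s n *\<^sub>R b) - F z - s n *\<^sub>R D) / norm (s n)) \<longlonglongrightarrow> 0" .
  moreover have "\<forall>\<^sub>F n in sequentially. s n \<noteq> 0"
    using s by (simp add: filterlim_at)
  then have "\<forall>\<^sub>F n in sequentially. norm (F (z + s n *\<^sub>R b) - F z - s n *\<^sub>R D) / norm (s n)
      = norm ((1 / s n) *\<^sub>R (F (z + s n *\<^sub>R b) - F z) - D)"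
  proof eventually_elim
    case (elim n)
    then have "(1 / s n) *\<^sub>R (F (z + s n *\<^sub>R b) - F z) - D
        = (1 / s n) *\<^sub>R (F (z + s n *\<^sub>R b) - F z - s n *\<^sub>R D)"
      by (simp add: algebra_simps)
    then show ?case by (simp add: divide_inverse mult.commute)
  qed
  ultimately have "(\<lambda>n. norm ((1 / s n) *\<^sub>R (F (z + s n *\<^sub>R b) - F z) - D)) \<longlonglongrightarrow> 0"
    by (rule Lim_transform_eventually)
  then show ?thesis by (simp add: tendsto_norm_zero_iff LIM_zero_iff)
qed

lemma norm_difference_quotient_le:
  assumes der: "\<And>z. has_dpart b F (F' z) z" and M: "\<And>z. norm (F' z) \<le> M"
    and R: "\<And>z. R < norm z \<Longrightarrow> F z = 0" and s: "0 < s" "s \<le> 1"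
  shows "norm ((1 / s) *\<^sub>R (F (z + s *\<^sub>R b) - F z)) \<le> M * indicator (cball 0 (R + norm b)) z"
proof (cases "z \<in> cball 0 (R + norm b)")
  case True
  have "norm ((1 / s) *\<^sub>R (F (z + s *\<^sub>R b) - F z)) = norm (F (z + s *\<^sub>R b) - F z) / s"
    using s by simp
  also have "\<dots> \<le> M"
    using norm_diff_le_along_line[OF der M, of z s] s by (simp add: field_simps)
  finally show ?thesis using True by simp
next
  case False
  have "norm (s *\<^sub>R b) \<le> norm b" using s by (simp add: mult_left_le_one_le)
  then have "norm z \<le> norm (z + s *\<^sub>R b) + norm b"
    using norm_triangle_ineq4[of "z + s *\<^sub>R b" "s *\<^sub>R b"] by simp
  moreover have "R + norm b < norm z" "0 \<le> norm b" using False by simp_all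
  ultimately have "R < norm z" "R < norm (z + s *\<^sub>R b)" by linarith+
  then show ?thesis using False R by simp
qed

text \<open>The difference quotients along \<open>b\<close> have integral 0 by translation invariance of the
  Lebesgue measure, and converge to \<open>F'\<close> dominatedly.\<close>
lemma integral_dpart_eq_0:
  fixes F F' :: "'a::euclidean_space \<Rightarrow> complex"
  assumes cF: "continuous_on UNIV F" and cF': "continuous_on UNIV F'" and K: "compact K"
    and out: "\<And>z. z \<notin> K \<Longrightarrow> F z = 0" "\<And>z. z \<notin> K \<Longrightarrow> F' z = 0"
    and der: "\<And>z. has_dpart b F (F' z) z"
  shows "(\<integral>z. F' z \<partial>lborel) = 0"
proof -
  obtain M where M: "\<And>z. norm (F' z) \<le> M"
    using bounded_range_compact_support[OF cF' K out(2)] unfolding bounded_iff by auto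
  obtain R where "\<And>z. z \<in> K \<Longrightarrow> norm z \<le> R"
    using compact_imp_bounded[OF K] unfolding bounded_iff by auto
  then have R: "\<And>z. R < norm z \<Longrightarrow> F z = 0" using out(1) by force
  define s where "s n = 1 / real (Suc n)" for n
  have s: "s n > 0" "s n \<le> 1" for n by (auto simp: s_def field_simps)
  define Q where "Q n z = (1 / s n) *\<^sub>R (F (z + s n *\<^sub>R b) - F z)" for n z
  have shifted: "continuous_on UNIV (\<lambda>z. F (z + c))" "integrable lborel (\<lambda>z. F (z + c))" for c
  proof -
    show cont: "continuous_on UNIV (\<lambda>z. F (z + c))"
      by (rule continuous_on_compose2[OF cF]) (auto intro!: continuous_intros)
    show "integrable lborel (\<lambda>z. F (z + c))"
      by (rule integrable_compact_support[OF cont compact_translation[OF K, of "- c"]])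
        (auto intro!: out(1) simp: image_iff algebra_simps)
  qed
  have "(\<lambda>n. integral\<^sup>L lborel (Q n)) \<longlonglongrightarrow> integral\<^sup>L lborel F'"
  proof (rule integral_dominated_convergence[where w = "\<lambda>z. M * indicator (cball 0 (R + norm b)) z"])
    show "F' \<in> borel_measurable lborel" "Q n \<in> borel_measurable lborel" for n
      unfolding Q_def using cF' cF shifted(1)
      by (auto intro!: borel_measurable_continuous_onI continuous_intros)
    show "integrable lborel (\<lambda>z. M * indicator (cball 0 (R + norm b)) z)"
      by (intro integrable_mult_right integrable_real_indicator emeasure_bounded_finite) auto
    have "filterlim s (at 0) sequentially"
      unfolding filterlim_at s_def using LIMSEQ_Suc[OF lim_const_over_n[of 1]] by auto
    then show "AE z in lborel. (\<lambda>n. Q n z) \<longlonglongrightarrow> F' z"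
      unfolding Q_def by (intro AE_I2 difference_quotient_tendsto der)
    show "AE z in lborel. norm (Q n z) \<le> M * indicator (cball 0 (R + norm b)) z" for n
      unfolding Q_def by (intro AE_I2 norm_difference_quotient_le[OF der M R s])
  qed
  moreover have "integral\<^sup>L lborel (Q n) = 0" for n
    unfolding Q_def using shifted(2)[of "s n *\<^sub>R b"] integrable_compact_support[OF cF K out(1)]
    by (simp add: lborel_integral_translate borel_measurable_continuous_onI[OF cF])
  ultimately show ?thesis by (simp add: LIMSEQ_const_iff)
qed

lemma integral_by_parts_dpart:
  assumes "test_fun \<phi>" "b \<in> Basis" "continuous_on UNIV P" "continuous_on UNIV P'"
    and der: "\<And>z. has_dpart b P (P' z) z"
  shows "(\<integral>z. P z * dpart b \<phi> z \<partial>lborel) = - (\<integral>z. P' z * \<phi> z \<partial>lborel)"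
proof -
  have \<phi>': "test_fun (dpart b \<phi>)" using assms(1,2) by (rule test_fun_dpart)
  have "(\<integral>z. P' z * \<phi> z + P z * dpart b \<phi> z \<partial>lborel) = 0"
  proof (rule integral_dpart_eq_0[where K = "tsupport \<phi>"])
    show "has_dpart b (\<lambda>z. P z * \<phi> z) (P' z * \<phi> z + P z * dpart b \<phi> z) z" for z
      using has_vector_derivative_mult[OF der smooth_fun_has_dpart[of \<phi> b]] assms(1,2)
      by (simp add: test_fun_def algebra_simps)
  qed (use assms \<phi>' in \<open>auto intro!: continuous_intros simp: test_fun_continuous_on not_in_tsupport
      dpart_eq_0_outside_tsupport test_fun_def\<close>)
  with assms \<phi>' show ?thesis
    by (simp add: integrable_mult_test_fun eq_neg_iff_add_eq_0 add.commute)
qed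

lemma integral_pos_continuous:
  fixes g :: "'a::euclidean_space \<Rightarrow> real"
  assumes "continuous_on UNIV g" "integrable lborel g" "\<And>z. g z \<ge> 0" "g a > 0"
  shows "(\<integral>z. g z \<partial>lborel) > 0"
proof -
  have "open {z. g z > 0}"
    using open_Collect_less[OF continuous_on_const assms(1)] by simp
  then obtain e where e: "e > 0" "ball a e \<subseteq> {z. g z > 0}"
    using assms(4) open_contains_ball by blast
  show ?thesis
  proof (rule ccontr)
    assume "\<not> ?thesis"
    then have "AE z in lborel. g z = 0"
      using integral_nonneg_eq_0_iff_AE[OF assms(2)] assms(3) integral_nonneg_AE[of g lborel]
      by (simp add: order_antisym)
    then have "AE z in lborel. z \<notin> ball a e"
      by eventually_elim (use e in auto)
    then have "emeasure lborel (ball a e) = 0"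
      by (subst (asm) AE_iff_measurable[of "ball a e"]) auto
    moreover have "emeasure lborel (ball a e) > 0" using e by (simp add: emeasure_ball)
    ultimately show False by simp
  qed
qed

section \<open>Integrating Schwartz functions\<close>

definition cauchy_weight :: "'a::euclidean_space \<Rightarrow> real" where
  "cauchy_weight x = (\<Prod>b\<in>Basis. inverse (1 + (x \<bullet> b)\<^sup>2))"

lemma cauchy_weight_nonneg: "cauchy_weight x \<ge> 0"
  unfolding cauchy_weight_def by (intro prod_nonneg) auto

lemma integrable_cauchy_weight: "integrable lborel (cauchy_weight :: 'a::euclidean_space \<Rightarrow> real)"
proof -
  have "(\<lambda>x::'a. ennreal (norm (cauchy_weight x))) = (\<lambda>x. \<Prod>b\<in>Basis. ennreal (inverse (1 + (x \<bullet> b)\<^sup>2)))"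
    by (simp add: cauchy_weight_def prod_ennreal prod_nonneg)
  then have "(\<integral>\<^sup>+x. ennreal (norm (cauchy_weight (x::'a))) \<partial>lborel)
      = (\<integral>\<^sup>+x. (\<Prod>b\<in>(Basis::'a set). ennreal (inverse (1 + (x \<bullet> b)\<^sup>2))) \<partial>lborel)"
    by (simp only:)
  also have "\<dots> = (\<Prod>b\<in>(Basis::'a set). (\<integral>\<^sup>+r. ennreal (inverse (1 + r\<^sup>2)) \<partial>lborel))"
    by (rule nn_integral_lborel_prod) auto
  also have "\<dots> = (\<Prod>b\<in>(Basis::'a set). ennreal (\<integral>r. inverse (1 + r\<^sup>2) \<partial>lborel))"
    using integrable_inverse_1_plus_square
    by (intro prod.cong refl nn_integral_eq_integral)
      (auto simp: set_integrable_def)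
  also have "\<dots> < \<infinity>" by (simp add: power_less_top_ennreal)
  finally show ?thesis
    unfolding cauchy_weight_def by (simp add: integrable_iff_bounded)
qed

lemma inverse_power_le_cauchy_weight:
  fixes x :: "'a::euclidean_space"
  shows "inverse ((1 + norm x) ^ (2 * DIM('a))) \<le> cauchy_weight x"
proof -
  have "(1 + (x \<bullet> b)\<^sup>2) \<le> (1 + norm x)\<^sup>2" if "b \<in> Basis" for b :: 'a
  proof -
    have "(x \<bullet> b)\<^sup>2 \<le> (norm x)\<^sup>2"
      using Basis_le_norm[OF that, of x] by (metis abs_ge_zero power2_abs power_mono)
    then show ?thesis by (simp add: power2_eq_square algebra_simps add_increasing2)
  qed
  then have "(\<Prod>b\<in>(Basis::'a set). 1 + (x \<bullet> b)\<^sup>2) \<le> ((1 + norm x)\<^sup>2) ^ DIM('a)"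
    using prod_mono[of Basis "\<lambda>b. 1 + (x \<bullet> b)\<^sup>2" "\<lambda>_. (1 + norm x)\<^sup>2"] by simp
  moreover have "(\<Prod>b\<in>(Basis::'a set). 1 + (x \<bullet> b)\<^sup>2) > 0"
    by (intro prod_pos) (auto intro: add_pos_nonneg)
  ultimately have "inverse ((1 + norm x) ^ (2 * DIM('a))) \<le> inverse (\<Prod>b\<in>(Basis::'a set). 1 + (x \<bullet> b)\<^sup>2)"
    unfolding power_mult by (rule le_imp_inverse_le)
  also have "\<dots> = cauchy_weight x"
    unfolding cauchy_weight_def using prod_inversef[of "\<lambda>b. 1 + (x \<bullet> b)\<^sup>2" Basis] by (simp add: o_def)
  finally show ?thesis .
qed

lemma schwartz_fun_le_cauchy_weight:
  fixes \<psi> :: "'a::euclidean_space \<Rightarrow> complex"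
  assumes "schwartz_fun \<psi>"
  shows "norm (\<psi> x) \<le> Sseminorm (2 * DIM('a)) \<psi> * cauchy_weight x"
proof -
  let ?w = "(1 + norm x) ^ (2 * DIM('a))"
  have "1 + norm x > 0" by (simp add: add_pos_nonneg)
  then have "norm (\<psi> x) = inverse ?w * (?w * norm (\<psi> x))" by (simp add: field_simps)
  also have "\<dots> \<le> cauchy_weight x * Sseminorm (2 * DIM('a)) \<psi>"
    using \<open>1 + norm x > 0\<close> cauchy_weight_nonneg
    by (intro mult_mono inverse_power_le_cauchy_weight weighted_le_Sseminorm assms) auto
  finally show ?thesis by (simp add: mult.commute)
qed

lemma
  fixes \<psi> :: "'a::euclidean_space \<Rightarrow> complex"
  assumes "schwartz_fun \<psi>" "continuous_on UNIV c" "\<And>x. norm (c x) \<le> 1"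
  shows integrable_bounded_mult_schwartz_fun: "integrable lborel (\<lambda>x. c x * \<psi> x)"
    and norm_integral_bounded_mult_schwartz_fun:
      "norm (\<integral>x. c x * \<psi> x \<partial>lborel) \<le> (\<integral>x. cauchy_weight (x::'a) \<partial>lborel) * Sseminorm (2 * DIM('a)) \<psi>"
proof -
  let ?S = "Sseminorm (2 * DIM('a)) \<psi>"
  have bound: "norm (c x * \<psi> x) \<le> ?S * cauchy_weight x" for x
    using assms(3)[of x] schwartz_fun_le_cauchy_weight[OF assms(1), of x]
    unfolding norm_mult by (meson mult_left_le_one_le norm_ge_zero order_trans)
  show integrable: "integrable lborel (\<lambda>x. c x * \<psi> x)"
  proof (rule Bochner_Integration.integrable_bound[OF integrable_mult_right[OF integrable_cauchy_weight]])
    have "continuous_on UNIV (\<lambda>x. c x * \<psi> x)"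
      using assms(1,2) unfolding schwartz_fun_def
      by (intro continuous_on_mult) (auto dest: smooth_fun_continuous_on)
    then show "(\<lambda>x. c x * \<psi> x) \<in> borel_measurable lborel"
      by (simp add: borel_measurable_continuous_onI)
    show "AE x in lborel. norm (c x * \<psi> x) \<le> norm (?S * cauchy_weight x)"
      by (intro AE_I2 order_trans[OF bound]) simp
  qed
  have "norm (\<integral>x. c x * \<psi> x \<partial>lborel) \<le> (\<integral>x. norm (c x * \<psi> x) \<partial>lborel)"
    by (rule integral_norm_bound)
  also have "\<dots> \<le> (\<integral>x. ?S * cauchy_weight (x::'a) \<partial>lborel)"
    using integrable bound by (intro integral_mono integrable_mult_right integrable_cauchy_weight) auto
  finally show "norm (\<integral>x. c x * \<psi> x \<partial>lborel) \<le> (\<integral>x. cauchy_weight (x::'a) \<partial>lborel) * ?S"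
    by (simp add: mult.commute)
qed

section \<open>Distributions given by continuous functions\<close>

definition integral_functional :: "('a::euclidean_space \<Rightarrow> complex) \<Rightarrow> ('a \<Rightarrow> complex) \<Rightarrow> complex" where
  "integral_functional P \<phi> = (if test_fun \<phi> then \<integral>z. P z * \<phi> z \<partial>lborel else 0)"

lemma distribution_integral_functional:
  assumes P: "continuous_on UNIV P"
  shows "distribution (integral_functional P)"
  unfolding distribution_def
proof (intro conjI allI impI)
  fix \<phi> g :: "'a \<Rightarrow> complex" and a b :: complex
  assume "test_fun \<phi>" "test_fun g"
  then show "integral_functional P (\<lambda>x. a * \<phi> x + b * g x) = a * integral_functional P \<phi> + b * integral_functional P g"
    using integrable_mult_test_fun[OF P]
    by (simp add: integral_functional_def test_fun_lincomb distrib_left mult.left_commute)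
next
  fix K :: "'a set" assume K: "compact K"
  define C where "C = (\<integral>z. indicator K z * norm (P z) \<partial>lborel)"
  have "norm (integral_functional P \<phi>) \<le> C * Cseminorm 0 \<phi>" if "test_fun \<phi>" "tsupport \<phi> \<subseteq> K" for \<phi>
  proof -
    have "norm (\<integral>z. P z * \<phi> z \<partial>lborel) \<le> (\<integral>z. norm (P z * \<phi> z) \<partial>lborel)"
      by (rule integral_norm_bound)
    also have "\<dots> \<le> (\<integral>z. indicator K z * norm (P z) * Cseminorm 0 \<phi> \<partial>lborel)"
    proof (rule integral_mono)
      show "integrable lborel (\<lambda>z. indicator K z * norm (P z) * Cseminorm 0 \<phi>)"
        using borel_integrable_compact[OF K, of "\<lambda>z. norm (P z)"] P
        by (auto intro!: continuous_intros intro: continuous_on_subset)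
      show "norm (P z * \<phi> z) \<le> indicator K z * norm (P z) * Cseminorm 0 \<phi>" for z
        using norm_le_Cseminorm_0[OF that(1), of z] not_in_tsupport[of z \<phi>] subsetD[OF that(2), of z]
        by (cases "z \<in> tsupport \<phi>") (auto simp: norm_mult mult_left_mono)
    qed (use integrable_mult_test_fun[OF P that(1)] in simp)
    finally show ?thesis using that(1) by (simp add: integral_functional_def C_def)
  qed
  then show "\<exists>C N. \<forall>\<phi>. test_fun \<phi> \<and> tsupport \<phi> \<subseteq> K \<longrightarrow> norm (integral_functional P \<phi>) \<le> C * Cseminorm N \<phi>"
    by blast
qed (simp add: integral_functional_def)

lemma integral_functional_cmult: "integral_functional (\<lambda>z. c * P z) \<phi> = c * integral_functional P \<phi>"
  by (simp add: integral_functional_def mult.assoc)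

lemma integral_functional_dpart:
  assumes "test_fun \<phi>" "b \<in> Basis" "continuous_on UNIV P" "continuous_on UNIV P'"
    and "\<And>z. has_dpart b P (P' z) z"
  shows "integral_functional P (dpart b \<phi>) = - integral_functional P' \<phi>"
  using integral_by_parts_dpart[OF assms] assms(1,2)
  by (simp add: integral_functional_def test_fun_dpart)

section \<open>Functionals built from tensor products\<close>

lemma tempered_cmult:
  assumes "tempered T" shows "tempered (\<lambda>\<psi>. a * T \<psi>)"
proof -
  obtain C N where "\<And>\<psi>. schwartz_fun \<psi> \<Longrightarrow> norm (T \<psi>) \<le> C * Sseminorm N \<psi>"
    using assms unfolding tempered_def by blast
  then have "\<forall>\<psi>. schwartz_fun \<psi> \<longrightarrow> norm (a * T \<psi>) \<le> (norm a * C) * Sseminorm N \<psi>"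
    by (auto simp: norm_mult mult.assoc intro: mult_left_mono)
  then have "\<exists>C N. \<forall>\<psi>. schwartz_fun \<psi> \<longrightarrow> norm (a * T \<psi>) \<le> C * Sseminorm N \<psi>"
    by blast
  with assms show ?thesis
    unfolding tempered_def by (auto simp: algebra_simps)
qed

lemma distribution_mult_const:
  assumes "distribution U" shows "distribution (\<lambda>\<phi>. U \<phi> * a)"
  unfolding distribution_def
proof (intro conjI allI impI)
  fix K :: "'a set" assume "compact K"
  then obtain C N where bound: "\<And>\<phi>. test_fun \<phi> \<and> tsupport \<phi> \<subseteq> K \<Longrightarrow> norm (U \<phi>) \<le> C * Cseminorm N \<phi>"
    using assms unfolding distribution_def by blast
  have "norm (U \<phi> * a) \<le> (C * norm a) * Cseminorm N \<phi>" if "test_fun \<phi> \<and> tsupport \<phi> \<subseteq> K" for \<phi>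
  proof -
    have "norm (U \<phi> * a) \<le> C * Cseminorm N \<phi> * norm a"
      unfolding norm_mult by (rule mult_right_mono[OF bound[OF that]]) simp
    then show ?thesis by (simp add: ac_simps)
  qed
  then show "\<exists>C N. \<forall>\<phi>. test_fun \<phi> \<and> tsupport \<phi> \<subseteq> K \<longrightarrow> norm (U \<phi> * a) \<le> C * Cseminorm N \<phi>"
    by blast
qed (use assms in \<open>auto simp: distribution_def algebra_simps\<close>)

lemma spat_tempered_map_product:
  fixes A :: "(real \<Rightarrow> complex) \<Rightarrow> complex" and T :: "(real^'d \<Rightarrow> complex) \<Rightarrow> complex"
  assumes "distribution A" "tempered T"
  shows "spat_tempered_map (\<lambda>\<phi> \<psi>. A \<phi> * T \<psi>)"
proof -
  have "A \<phi> = 0" if "\<not> test_fun \<phi>" for \<phi>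
    using assms(1) that by (simp add: distribution_def)
  moreover have "A (\<lambda>t. a * \<phi> t + b * g t) = a * A \<phi> + b * A g" if "test_fun \<phi>" "test_fun g" for \<phi> g a b
    using assms(1) that by (simp add: distribution_def)
  ultimately show ?thesis
    unfolding spat_tempered_map_def using assms
    by (auto simp: algebra_simps intro: tempered_cmult distribution_mult_const)
qed

lemma integral_functional_tensor:
  fixes f :: "'a::euclidean_space \<Rightarrow> complex" and g :: "'b::euclidean_space \<Rightarrow> complex"
  assumes "continuous_on UNIV f" "continuous_on UNIV g" "test_fun \<phi>" "test_fun \<psi>"
  shows "integral_functional (\<lambda>(x, t). f x * g t) (\<lambda>(x, t). \<phi> t * \<psi> x)
    = integral_functional g \<phi> * integral_functional f \<psi>"
proof -
  let ?F = "\<lambda>z. (case z of (x, t) \<Rightarrow> f x * g t) * (case z of (x, t) \<Rightarrow> \<phi> t * \<psi> x)"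
  have "continuous_on UNIV (\<lambda>(x, t). f x * g t)"
    unfolding case_prod_beta'
    by (intro continuous_intros continuous_on_compose2[OF assms(1)] continuous_on_compose2[OF assms(2)]) auto
  then have "integrable (lborel \<Otimes>\<^sub>M lborel) ?F"
    using integrable_mult_test_fun test_fun_tensor[OF assms(3,4)] by (simp add: lborel_prod)
  then have "(\<integral>z. ?F z \<partial>(lborel \<Otimes>\<^sub>M lborel)) = (\<integral>x. (\<integral>t. ?F (x, t) \<partial>lborel) \<partial>lborel)"
    by (rule lborel_pair.integral_fst'[symmetric])
  also have "\<dots> = (\<integral>x. (f x * \<psi> x) * (\<integral>t. g t * \<phi> t \<partial>lborel) \<partial>lborel)"
  proof (rule Bochner_Integration.integral_cong[OF refl])
    fix x
    have "(\<integral>t. ?F (x, t) \<partial>lborel) = (\<integral>t. (f x * \<psi> x) * (g t * \<phi> t) \<partial>lborel)"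
      by (simp add: ac_simps)
    then show "(\<integral>t. ?F (x, t) \<partial>lborel) = (f x * \<psi> x) * (\<integral>t. g t * \<phi> t \<partial>lborel)"
      by simp
  qed
  also have "\<dots> = (\<integral>t. g t * \<phi> t \<partial>lborel) * (\<integral>x. f x * \<psi> x \<partial>lborel)"
    by (simp add: mult.commute)
  finally show ?thesis
    using assms(3,4) test_fun_tensor[OF assms(3,4)] by (simp add: integral_functional_def lborel_prod)
qed

lemma vanishes_neg_time_integral_functional:
  fixes P :: "(real^'d) \<times> real \<Rightarrow> complex"
  assumes "\<And>z. snd z < 0 \<Longrightarrow> P z = 0"
  shows "vanishes_neg_time (integral_functional P)"
  unfolding vanishes_neg_time_def
proof (intro allI impI)
  fix \<phi> :: "(real^'d) \<times> real \<Rightarrow> complex"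
  assume \<phi>: "test_fun \<phi> \<and> tsupport \<phi> \<subseteq> {z. snd z < 0}"
  then have "(\<lambda>z. P z * \<phi> z) = (\<lambda>z. 0)"
    using assms not_in_tsupport[of _ \<phi>] by (intro ext) force
  with \<phi> show "integral_functional P \<phi> = 0" by (simp add: integral_functional_def)
qed

section \<open>Exponential solutions\<close>

definition exp_pairing :: "'a::euclidean_space \<Rightarrow> ('a \<Rightarrow> complex) \<Rightarrow> complex" where
  "exp_pairing y \<psi> = (if schwartz_fun \<psi> then \<integral>x. exp (\<i> * of_real (y \<bullet> x)) * \<psi> x \<partial>lborel else 0)"

lemma tempered_exp_pairing: "tempered (exp_pairing y)"
proof -
  have bound: "continuous_on UNIV (\<lambda>x. exp (\<i> * of_real (y \<bullet> x)))" "norm (exp (\<i> * of_real (y \<bullet> x))) \<le> 1" for x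
    by (auto intro!: continuous_intros simp: norm_exp_i_times)
  note integrable = integrable_bounded_mult_schwartz_fun[OF _ bound]
  have "exp_pairing y (\<lambda>x. a * \<psi> x + b * g x) = a * exp_pairing y \<psi> + b * exp_pairing y g"
    if "schwartz_fun \<psi>" "schwartz_fun g" for \<psi> g a b
    using that integrable[OF that(1)] integrable[OF that(2)]
    by (simp add: exp_pairing_def schwartz_fun_lincomb distrib_left mult.left_commute)
  moreover have "norm (exp_pairing y \<psi>) \<le> (\<integral>x. cauchy_weight (x::'a) \<partial>lborel) * Sseminorm (2 * DIM('a)) \<psi>"
    if "schwartz_fun \<psi>" for \<psi> :: "'a \<Rightarrow> complex"
    using norm_integral_bounded_mult_schwartz_fun[OF that bound] that by (simp add: exp_pairing_def)
  ultimately show ?thesis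
    unfolding tempered_def by (auto simp: exp_pairing_def)
qed

definition exp_flat :: "real^'d \<Rightarrow> nat \<Rightarrow> (real^'d) \<times> real \<Rightarrow> complex" where
  "exp_flat y j = (\<lambda>(x, t). exp (\<i> * of_real (y \<bullet> x)) * of_real (flat_fun j t))"

lemma continuous_on_exp_flat: "continuous_on UNIV (exp_flat y j)"
  unfolding exp_flat_def case_prod_beta'
  by (intro continuous_intros continuous_on_compose2[OF continuous_on_flat_fun]) auto

lemma ex_in_Basis: "ex k \<in> Basis"
  by (auto simp: ex_def Basis_prod_def)

lemma et_in_Basis: "et \<in> Basis"
  by (auto simp: et_def Basis_prod_def)

lemma ex_eq_iff: "ex k = ex k' \<longleftrightarrow> k = k'"
  by (auto simp: ex_def axis_eq_axis)

lemma ex_neq_et: "ex k \<noteq> et"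
  by (auto simp: ex_def et_def)

lemma exp_flat_has_dpart_ex: "has_dpart (ex k) (exp_flat y j) (\<i> * of_real (y $ k) * exp_flat y j z) z"
proof -
  obtain x t where z: "z = (x, t)" by fastforce
  have "((\<lambda>s. exp (\<i> * of_real (y \<bullet> x) + of_real s * (\<i> * of_real (y $ k))) * of_real (flat_fun j t))
      has_vector_derivative (exp (\<i> * of_real (y \<bullet> x) + of_real 0 * (\<i> * of_real (y $ k)))
        * (\<i> * of_real (y $ k))) * of_real (flat_fun j t)) (at 0)"
    by (intro has_vector_derivative_mult_left has_vector_derivative_real_field)
      (auto intro!: derivative_eq_intros)
  then show ?thesis
    by (simp add: z exp_flat_def ex_def inner_axis algebra_simps)
qed

lemma exp_flat_has_dpart_et: "has_dpart et (exp_flat y j) (exp_flat y (Suc j) z) z"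
proof -
  obtain x t where z: "z = (x, t)" by fastforce
  have "((\<lambda>s. of_real (flat_fun j (t + 1 * s))) has_vector_derivative 1 *\<^sub>R of_real (flat_fun (Suc j) t)) (at 0)"
    by (intro has_vector_derivative_affine_comp has_vector_derivative_of_real) (simp add: flat_fun_has_derivative)
  from has_vector_derivative_mult_right[OF this, of "exp (\<i> * of_real (y \<bullet> x))"] show ?thesis
    by (simp add: z exp_flat_def et_def)
qed

lemma integral_functional_diter:
  fixes P :: "nat \<Rightarrow> (real^'d) \<times> real \<Rightarrow> complex" and c :: "'d \<Rightarrow> complex"
  assumes "test_fun \<phi>" "set bs \<subseteq> insert et (range ex)"
    and cont: "\<And>j. continuous_on UNIV (P j)"
    and dx: "\<And>j k z. has_dpart (ex k) (P j) (c k * P j z) z"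
    and dt: "\<And>j z. has_dpart et (P j) (P (Suc j) z) z"
  shows "integral_functional (P j) (diter bs \<phi>) = (-1) ^ length bs *
    (\<Prod>k\<in>UNIV. c k ^ count_list bs (ex k)) * integral_functional (P (j + count_list bs et)) \<phi>"
  using assms(2)
proof (induction bs arbitrary: j)
  case (Cons b bs)
  have "set bs \<subseteq> insert et (range ex)" using Cons.prems by simp
  also have "\<dots> \<subseteq> Basis" using ex_in_Basis et_in_Basis by blast
  finally have "set bs \<subseteq> Basis" .
  then have \<phi>': "test_fun (diter bs \<phi>)" by (rule test_fun_diter[OF assms(1)])
  from Cons.prems consider "b = et" | k where "b = ex k" by auto
  then show ?case
  proof cases
    case 1
    then have "integral_functional (P j) (diter (b # bs) \<phi>) = - integral_functional (P (Suc j)) (diter bs \<phi>)"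
      using integral_functional_dpart[OF \<phi>' et_in_Basis cont cont dt] by simp
    with Cons 1 show ?thesis by (simp add: ex_neq_et[symmetric])
  next
    case 2
    have "(\<Prod>k'\<in>UNIV. c k' ^ count_list (b # bs) (ex k'))
        = (\<Prod>k'\<in>UNIV. c k' ^ count_list bs (ex k') * (if k' = k then c k' else 1))"
      using 2 by (intro prod.cong) (auto simp: ex_eq_iff)
    also have "\<dots> = c k * (\<Prod>k'\<in>UNIV. c k' ^ count_list bs (ex k'))"
      by (simp add: prod.distrib)
    finally have "(\<Prod>k'\<in>UNIV. c k' ^ count_list (b # bs) (ex k'))
        = c k * (\<Prod>k'\<in>UNIV. c k' ^ count_list bs (ex k'))" .
    moreover have "integral_functional (P j) (diter (b # bs) \<phi>)
        = - (c k * integral_functional (P j) (diter bs \<phi>))"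
      using integral_functional_dpart[OF \<phi>' ex_in_Basis cont _ dx] 2 cont
      by (simp add: continuous_on_mult_left integral_functional_cmult)
    ultimately show ?thesis using Cons 2 by (simp add: ex_neq_et)
  qed
qed simp

lemma dlist_counts:
  "set (dlist m j) \<subseteq> insert et (range ex) \<and> (\<forall>i. count_list (dlist m j) (ex i) = Poly_Mapping.lookup m i)
    \<and> count_list (dlist m j) et = j"
proof -
  obtain bs where bs: "mset bs = (\<Sum>i\<in>UNIV. replicate_mset (Poly_Mapping.lookup m i) (ex i)) + replicate_mset j et"
    using ex_mset by blast
  then have "set bs \<subseteq> insert et (range ex)"
    by (auto simp flip: set_mset_mset simp: set_mset_sum split: if_splits)
  moreover have "count_list bs (ex i) = Poly_Mapping.lookup m i" "count_list bs et = j" for i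
    unfolding count_mset[symmetric] bs by (simp_all add: count_sum ex_eq_iff ex_neq_et ex_neq_et[symmetric])
  ultimately have "set bs \<subseteq> insert et (range ex) \<and>
      (\<forall>i. count_list bs (ex i) = Poly_Mapping.lookup m i) \<and> count_list bs et = j"
    by blast
  then show ?thesis unfolding dlist_def by (rule someI)
qed

lemma Dop_integral_functional:
  fixes P :: "nat \<Rightarrow> (real^'d) \<times> real \<Rightarrow> complex" and c :: "'d \<Rightarrow> complex"
  assumes "\<And>j. continuous_on UNIV (P j)"
    and "\<And>j k z. has_dpart (ex k) (P j) (c k * P j z) z"
    and "\<And>j z. has_dpart et (P j) (P (Suc j) z) z"
    and "test_fun \<phi>"
  shows "Dop p (integral_functional (P 0)) \<phi> =
    (\<Sum>j\<le>degree p. mpeval (coeff p j) (\<chi> k. c k) * integral_functional (P j) \<phi>)"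
proof -
  have "(-1) ^ length (dlist m j) * integral_functional (P 0) (diter (dlist m j) \<phi>)
      = (\<Prod>i\<in>UNIV. c i ^ Poly_Mapping.lookup m i) * integral_functional (P j) \<phi>" for j m
    using integral_functional_diter[where P = P and c = c and j = 0,
        OF assms(4) conjunct1[OF dlist_counts[of m j]] assms(1-3)]
      dlist_counts[of m j]
    by (simp add: power_add[symmetric])
  then show ?thesis
    using assms(4) unfolding Dop_def mpeval_def
    by (simp add: sum_distrib_right mult.assoc)
qed

lemma Dop_exp_flat:
  assumes "test_fun \<phi>"
  shows "Dop p (integral_functional (exp_flat y 0)) \<phi> =
    (\<Sum>j\<le>degree p. mpeval (coeff p j) (\<chi> k. \<i> * of_real (y $ k)) * integral_functional (exp_flat y j) \<phi>)"
  by (rule Dop_integral_functional[where P = "exp_flat y" and c = "\<lambda>k. \<i> * of_real (y $ k)",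
        OF continuous_on_exp_flat exp_flat_has_dpart_ex exp_flat_has_dpart_et assms])

lemma integral_functional_exp_flat_in_LDS: "integral_functional (exp_flat y 0) \<in> LDS"
proof -
  have W: "continuous_on UNIV (\<lambda>t. complex_of_real (flat_fun 0 t))"
    by (intro continuous_intros continuous_on_compose2[OF continuous_on_flat_fun]) auto
  have E: "continuous_on UNIV (\<lambda>x. exp (\<i> * of_real (y \<bullet> x)))"
    by (intro continuous_intros)
  have "integral_functional (exp_flat y 0) (\<lambda>(x, t). \<phi> t * \<psi> x)
      = integral_functional (\<lambda>t. of_real (flat_fun 0 t)) \<phi> * exp_pairing y \<psi>"
    if "test_fun \<phi>" "test_fun \<psi>" for \<phi> :: "real \<Rightarrow> complex" and \<psi>
    using integral_functional_tensor[OF E W that] that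
    by (simp add: exp_flat_def exp_pairing_def integral_functional_def test_fun_imp_schwartz_fun)
  then show ?thesis
    unfolding LDS_def
    by (auto intro!: distribution_integral_functional continuous_on_exp_flat W
        spat_tempered_map_product tempered_exp_pairing)
qed

lemma vanishes_neg_time_exp_flat: "vanishes_neg_time (integral_functional (exp_flat y j))"
  by (rule vanishes_neg_time_integral_functional) (auto simp: exp_flat_def flat_fun_eq_0)

section \<open>A test function detecting the exponential solutions\<close>

definition bump :: "'a::euclidean_space \<Rightarrow> real" where
  "bump z = (\<Prod>b\<in>Basis. flat_fun 0 (1 + z \<bullet> b) * flat_fun 0 (1 - z \<bullet> b))"

lemma bump_nonneg: "bump z \<ge> 0"
  unfolding bump_def by (intro prod_nonneg ballI mult_nonneg_nonneg flat_fun_0_nonneg)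

lemma bump_pos: "(\<And>b. b \<in> Basis \<Longrightarrow> \<bar>z \<bullet> b\<bar> < 1) \<Longrightarrow> bump z > 0"
  unfolding bump_def by (intro prod_pos) (fastforce intro!: mult_pos_pos flat_fun_0_pos simp: abs_less_iff)

lemma bump_eq_0:
  assumes "z \<notin> cbox (- One) One" shows "bump z = 0"
proof -
  obtain b where "b \<in> Basis" "\<not> (- 1 \<le> z \<bullet> b \<and> z \<bullet> b \<le> 1)"
    using assms by (auto simp: mem_box)
  then show ?thesis
    unfolding bump_def by (intro prod_zero bexI[of _ b]) (auto simp: flat_fun_eq_0)
qed

lemma continuous_on_bump: "continuous_on UNIV bump"
  unfolding bump_def
  by (intro continuous_on_prod ballI continuous_intros continuous_on_compose2[OF continuous_on_flat_fun]) auto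

lemma test_fun_bump: "test_fun (\<lambda>z::'a::euclidean_space. complex_of_real (bump z))"
  unfolding test_fun_def
proof
  have "smooth_fun (\<lambda>z::'a. \<Prod>b\<in>Basis. of_real (flat_fun 0 (1 * (z \<bullet> b) + 1)) * of_real (flat_fun 0 ((- 1) * (z \<bullet> b) + 1)))"
    by (intro smooth_fun_prod smooth_fun_mult smooth_fun_compose_inner smooth_fun_flat_fun) auto
  then show "smooth_fun (\<lambda>z::'a. complex_of_real (bump z))"
    by (simp add: bump_def add.commute)
  have "tsupport (\<lambda>z::'a. complex_of_real (bump z)) \<subseteq> cbox (- One) One"
    by (intro tsupport_subset closed_cbox) (auto intro: bump_eq_0 ccontr)
  then show "compact (tsupport (\<lambda>z::'a. complex_of_real (bump z)))"
    by (rule compact_tsupport_subset[OF compact_cbox])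
qed

lemma test_fun_mult_smooth:
  assumes "smooth_fun g" "test_fun f" shows "test_fun (\<lambda>z. g z * f z)"
proof -
  have "tsupport (\<lambda>z. g z * f z) \<subseteq> tsupport f"
    by (intro tsupport_subset closed_tsupport) (auto simp: tsupport_def intro: closure_subset[THEN subsetD])
  with assms show ?thesis
    unfolding test_fun_def by (auto intro: smooth_fun_mult compact_tsupport_subset)
qed

lemma smooth_fun_exp_neg_i: "smooth_fun (\<lambda>r::real. exp (- (\<i> * of_real r)))"
proof -
  have "smooth_fun ((\<lambda>n r::real. (- \<i>) ^ n * exp (- (\<i> * of_real r))) 0)"
  proof (rule smooth_fun_derivative_sequence)
    fix n and r :: real
    have "((\<lambda>z. (- \<i>) ^ n * exp (- (\<i> * z))) has_field_derivative (- \<i>) ^ Suc n * exp (- (\<i> * of_real r)))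
        (at (of_real r))"
      by (auto intro!: derivative_eq_intros simp: algebra_simps)
    from has_vector_derivative_real_field[OF this]
    show "((\<lambda>r. (- \<i>) ^ n * exp (- (\<i> * of_real r))) has_vector_derivative (- \<i>) ^ Suc n * exp (- (\<i> * of_real r))) (at r)"
      by simp
  qed
  then show ?thesis by simp
qed

text \<open>Against \<open>exp (-i y\<cdot>x) bump (x, t)\<close> the oscillation of \<open>exp_flat y 0\<close> cancels, leaving
  the integral of a nonnegative function that is positive at \<open>(0, 1/2)\<close>.\<close>
lemma integral_functional_exp_flat_ne_0:
  fixes y :: "real^'d" shows "integral_functional (exp_flat y 0) \<noteq> (\<lambda>_. 0)"
proof
  let ?\<chi> = "\<lambda>z. exp (- (\<i> * of_real (z \<bullet> (y, 0)))) * complex_of_real (bump z)"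
  let ?g = "\<lambda>z::(real^'d) \<times> real. flat_fun 0 (snd z) * bump z"
  have \<chi>: "test_fun ?\<chi>"
    using smooth_fun_compose_inner[OF smooth_fun_exp_neg_i, where c = 1 and v = "(y, 0)" and a = 0]
    by (intro test_fun_mult_smooth test_fun_bump) simp
  have "(\<lambda>z. exp_flat y 0 z * ?\<chi> z) = (\<lambda>z. of_real (?g z))"
    by (auto simp: exp_flat_def inner_commute exp_minus field_simps split: prod.splits)
  then have "integral_functional (exp_flat y 0) ?\<chi> = (\<integral>z. of_real (?g z) \<partial>lborel)"
    unfolding integral_functional_def if_P[OF \<chi>] by (simp only:)
  also have "\<dots> = of_real (\<integral>z. ?g z \<partial>lborel)"
    by (rule integral_complex_of_real)
  finally have "integral_functional (exp_flat y 0) ?\<chi> = of_real (\<integral>z. ?g z \<partial>lborel)" .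
  moreover have "(\<integral>z. ?g z \<partial>lborel) > 0"
  proof (rule integral_pos_continuous[where a = "(0, 1 / 2)"])
    show cont: "continuous_on UNIV ?g"
      by (intro continuous_intros continuous_on_bump continuous_on_compose2[OF continuous_on_flat_fun]) auto
    show "integrable lborel ?g"
      by (rule integrable_compact_support[OF cont compact_cbox[of "- One" One]]) (simp add: bump_eq_0)
    show "?g z \<ge> 0" for z
      by (simp add: bump_nonneg flat_fun_0_nonneg)
    show "?g (0, 1 / 2) > 0"
      by (intro mult_pos_pos flat_fun_0_pos bump_pos) (auto simp: Basis_prod_def)
  qed
  moreover assume "integral_functional (exp_flat y 0) = (\<lambda>_. 0)"
  ultimately show False by simp
qed

lemma generator_in_ideal_gen: "a \<in> A \<Longrightarrow> a \<in> ideal_gen A"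
  unfolding ideal_gen_def by (intro CollectI exI[of _ "{a}"] exI[of _ "\<lambda>_. 1"]) auto

theorem theorem1p9:
  fixes p :: "('d::finite) mpoly poly"
  assumes "Nsp (LDS :: (((real^'d) \<times> real \<Rightarrow> complex) \<Rightarrow> complex) set) p = {\<lambda>_. 0}"
  shows "Vzero (Xcontent p) \<inter> (imag_axis_space :: (complex^'d) set) = {}"
proof (rule ccontr)
  assume "Vzero (Xcontent p) \<inter> imag_axis_space \<noteq> {}"
  then obtain y :: "real^'d" where "(\<chi> k. \<i> * of_real (y $ k)) \<in> Vzero (Xcontent p)"
    unfolding imag_axis_space_def by blast
  then have zero: "mpeval (coeff p j) (\<chi> k. \<i> * of_real (y $ k)) = 0" if "j \<le> degree p" for j
    using that unfolding Vzero_def Xcontent_def by (blast intro: generator_in_ideal_gen)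
  let ?U = "integral_functional (exp_flat y 0)"
  have "Dop p ?U = (\<lambda>_. 0)"
  proof
    show "Dop p ?U \<phi> = 0" for \<phi>
      by (cases "test_fun \<phi>") (simp add: Dop_exp_flat zero, simp add: Dop_def)
  qed
  then have "?U \<in> Nsp LDS p"
    unfolding Nsp_def using integral_functional_exp_flat_in_LDS vanishes_neg_time_exp_flat by blast
  with assms integral_functional_exp_flat_ne_0 show False by blast
qed

end
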